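(* Let $(X,\|\cdot\|)$ be a normed linear space over $\mathbb{R}$ or $\mathbb{C}$. Then for all $x,a\in X$, $$\langle x,a\rangle_i\ \ge\ \|a\|\left(\|a\|-\|x-a\|\right).$$ The inequality is sharp: for every $a\in X\setminus\{0\}$ and every $\varepsilon\in(0,1)$, equality holds for $x=\varepsilon a$, both sides being equal to the nonzero number $\varepsilon\|a\|^2$.
   Context: For a normed linear space $(X,\|\cdot\|)$, the inferior semi-inner product is defined for $x,y\in X$ by $\langle x,y\rangle_i:=\lim_{t\to 0^-}\frac{\|y+tx\|^2-\|y\|^2}{2t}$. *)

theory Defs
  imports "HOL-Analysis.Analysis"
begin

text \<open>Inferior semi-inner product: the left-hand limit at 0 of
  (norm (y + t x)^2 - norm y^2) / (2 t).  Real scalars t are used; complex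
  normed spaces are real normed vector spaces as well.\<close>
definition sip_i :: "'a::real_normed_vector \<Rightarrow> 'a \<Rightarrow> real" where
  "sip_i x y = Lim (at_left 0)
     (\<lambda>t::real. ((norm (y + t *\<^sub>R x))\<^sup>2 - (norm y)\<^sup>2) / (2 * t))"

end

theory Submission
  imports Defs
begin

text \<open>The function \<open>t \<mapsto> \<parallel>a + t x\<parallel>\<close> is convex, so its difference quotients at \<open>0\<close>
  increase as \<open>t \<up> 0\<close> and are bounded by \<open>\<parallel>x\<parallel>\<close>; hence they have a left limit \<open>L\<close>, and
  \<open>\<langle>x, a\<rangle>\<^sub>i = \<parallel>a\<parallel> L\<close>. Writing \<open>a + t x = (1 + t) a + t (x - a)\<close>, the triangle inequality gives
  \<open>\<parallel>a + t x\<parallel> \<le> \<parallel>a\<parallel> + t (\<parallel>a\<parallel> - \<parallel>x - a\<parallel>)\<close> for \<open>-1 \<le> t < 0\<close>, so every quotient, and hence \<open>L\<close>,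
  is at least \<open>\<parallel>a\<parallel> - \<parallel>x - a\<parallel>\<close>. For \<open>x = \<epsilon> a\<close> all quotients near \<open>0\<close> equal \<open>\<epsilon> \<parallel>a\<parallel>\<close>.\<close>

definition norm_slope :: "'a::real_normed_vector \<Rightarrow> 'a \<Rightarrow> real \<Rightarrow> real" where
  "norm_slope a x t = (norm (a + t *\<^sub>R x) - norm a) / t"

lemma convex_on_norm_line: "convex_on UNIV (\<lambda>t::real. norm (a + t *\<^sub>R x))"
proof (rule convex_onI)
  fix u s t :: real
  assume "0 < u" "u < 1"
  have "a + ((1 - u) *\<^sub>R s + u *\<^sub>R t) *\<^sub>R x = (1 - u) *\<^sub>R (a + s *\<^sub>R x) + u *\<^sub>R (a + t *\<^sub>R x)"
    by (simp add: algebra_simps)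
  then show "norm (a + ((1 - u) *\<^sub>R s + u *\<^sub>R t) *\<^sub>R x)
      \<le> (1 - u) * norm (a + s *\<^sub>R x) + u * norm (a + t *\<^sub>R x)"
    using norm_triangle_ineq[of "(1 - u) *\<^sub>R (a + s *\<^sub>R x)" "u *\<^sub>R (a + t *\<^sub>R x)"]
      \<open>0 < u\<close> \<open>u < 1\<close> by simp
qed simp

lemma norm_slope_mono_neg:
  assumes "s \<le> t" "t < 0"
  shows "norm_slope a x s \<le> norm_slope a x t"
proof (cases "s = t")
  case False
  with assms have "s < t" by simp
  from convex_on_slope_le(2)[OF convex_on_norm_line _ _ this \<open>t < 0\<close>]
  show ?thesis by (simp add: norm_slope_def)
qed simp

lemma abs_norm_slope_le: "\<bar>norm_slope a x t\<bar> \<le> norm x"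
proof (cases "t = 0")
  case False
  have "\<bar>norm (a + t *\<^sub>R x) - norm a\<bar> \<le> \<bar>t\<bar> * norm x"
    using norm_triangle_ineq3[of "a + t *\<^sub>R x" a] by simp
  with False show ?thesis
    by (simp add: norm_slope_def abs_divide divide_le_eq mult.commute)
qed (simp add: norm_slope_def)

lemma norm_slope_convergent_at_left: "\<exists>L. (norm_slope a x \<longlongrightarrow> L) (at_left 0)"
proof -
  have "(norm_slope a x \<longlongrightarrow> Sup (norm_slope a x ` ({..<0} \<inter> UNIV))) (at 0 within ({..<0} \<inter> UNIV))"
    by (rule Lim_left_bound[where K = "norm x"])
      (auto intro: norm_slope_mono_neg order_trans[OF abs_ge_self abs_norm_slope_le])
  then show ?thesis by auto
qed

lemma sip_i_eq_norm_mult_slope_limit: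
  assumes "(norm_slope a x \<longlongrightarrow> L) (at_left 0)"
  shows "sip_i x a = norm a * L"
proof -
  have "((\<lambda>t. norm (a + t *\<^sub>R x)) \<longlongrightarrow> norm (a + 0 *\<^sub>R x)) (at_left 0)"
    by (intro tendsto_intros)
  then have lim: "((\<lambda>t. norm_slope a x t * ((norm (a + t *\<^sub>R x) + norm a) / 2))
      \<longlongrightarrow> L * ((norm a + norm a) / 2)) (at_left 0)"
    by (intro tendsto_mult tendsto_divide tendsto_add tendsto_const assms) simp_all
  have quot: "norm_slope a x t * ((norm (a + t *\<^sub>R x) + norm a) / 2)
      = ((norm (a + t *\<^sub>R x))\<^sup>2 - (norm a)\<^sup>2) / (2 * t)" if "t < 0" for t
    using that by (simp add: norm_slope_def power2_eq_square field_simps)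
  have "eventually (\<lambda>t::real. t < 0) (at_left 0)"
    by (simp add: eventually_at_filter)
  then have "eventually (\<lambda>t. norm_slope a x t * ((norm (a + t *\<^sub>R x) + norm a) / 2)
      = ((norm (a + t *\<^sub>R x))\<^sup>2 - (norm a)\<^sup>2) / (2 * t)) (at_left 0)"
    by eventually_elim (rule quot)
  from tendsto_cong[OF this, THEN iffD1, OF lim]
  have "sip_i x a = L * ((norm a + norm a) / 2)"
    unfolding sip_i_def by (intro tendsto_Lim) (simp_all add: trivial_limit_at_left_real)
  then show ?thesis by simp
qed

lemma norm_slope_lower_bound:
  assumes "-1 \<le> t" "t < 0"
  shows "norm a - norm (x - a) \<le> norm_slope a x t"
proof -
  have "a + t *\<^sub>R x = (1 + t) *\<^sub>R a + t *\<^sub>R (x - a)"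
    by (simp add: algebra_simps)
  then have "norm (a + t *\<^sub>R x) \<le> norm ((1 + t) *\<^sub>R a) + norm (t *\<^sub>R (x - a))"
    by (metis norm_triangle_ineq)
  also have "\<dots> = (1 + t) * norm a - t * norm (x - a)"
    using assms by simp
  finally have "norm (a + t *\<^sub>R x) - norm a \<le> (norm a - norm (x - a)) * t"
    by (simp add: algebra_simps)
  with assms show ?thesis
    by (simp add: norm_slope_def neg_le_divide_eq)
qed

lemma sip_i_ge: "sip_i x a \<ge> norm a * (norm a - norm (x - a))"
proof -
  obtain L where L: "(norm_slope a x \<longlongrightarrow> L) (at_left 0)"
    using norm_slope_convergent_at_left by blast
  have "norm a - norm (x - a) \<le> L"
    by (rule tendsto_lowerbound[OF L eventually_at_leftI[of "-1"]])
      (auto intro: norm_slope_lower_bound simp: trivial_limit_at_left_real)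
  then show ?thesis
    by (simp add: sip_i_eq_norm_mult_slope_limit[OF L] mult_left_mono)
qed

lemma sip_i_scaleR_self: "sip_i (c *\<^sub>R b) b = c * (norm b)\<^sup>2"
proof -
  have "eventually (\<lambda>t. norm_slope b (c *\<^sub>R b) t = c * norm b) (at_left 0)"
  proof (rule eventually_at_leftI[of "- 1 / (\<bar>c\<bar> + 1)"])
    fix t :: real
    assume t: "t \<in> {- 1 / (\<bar>c\<bar> + 1)<..<0}"
    then have "\<bar>t * c\<bar> < 1"
      by (auto simp: abs_mult field_simps)
    then have "0 < 1 + t * c"
      by (simp add: abs_less_iff)
    moreover have "b + t *\<^sub>R c *\<^sub>R b = (1 + t * c) *\<^sub>R b"
      by (simp add: algebra_simps)
    ultimately have "norm (b + t *\<^sub>R c *\<^sub>R b) = (1 + t * c) * norm b"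
      by simp
    with t show "norm_slope b (c *\<^sub>R b) t = c * norm b"
      by (simp add: norm_slope_def field_simps)
  qed simp
  then have "(norm_slope b (c *\<^sub>R b) \<longlongrightarrow> c * norm b) (at_left 0)"
    by (rule tendsto_eventually)
  then show ?thesis
    by (simp add: sip_i_eq_norm_mult_slope_limit power2_eq_square)
qed

theorem lemma2p2:
  fixes x a :: "'a::real_normed_vector"
  shows "sip_i x a \<ge> norm a * (norm a - norm (x - a))
     \<and> (\<forall>b::'a. \<forall>\<epsilon>::real. b \<noteq> 0 \<and> 0 < \<epsilon> \<and> \<epsilon> < 1 \<longrightarrow>
           sip_i (\<epsilon> *\<^sub>R b) b = \<epsilon> * (norm b)\<^sup>2
         \<and> norm b * (norm b - norm (\<epsilon> *\<^sub>R b - b)) = \<epsilon> * (norm b)\<^sup>2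
         \<and> \<epsilon> * (norm b)\<^sup>2 \<noteq> 0)"
proof (intro conjI allI impI sip_i_ge sip_i_scaleR_self)
  fix b :: 'a and \<epsilon> :: real
  assume "b \<noteq> 0 \<and> 0 < \<epsilon> \<and> \<epsilon> < 1"
  then have b: "b \<noteq> 0" and \<epsilon>: "0 < \<epsilon>" "\<epsilon> < 1" by auto
  have "\<epsilon> *\<^sub>R b - b = (\<epsilon> - 1) *\<^sub>R b"
    by (simp add: algebra_simps)
  then have "norm (\<epsilon> *\<^sub>R b - b) = (1 - \<epsilon>) * norm b"
    using \<epsilon> by simp
  then show "norm b * (norm b - norm (\<epsilon> *\<^sub>R b - b)) = \<epsilon> * (norm b)\<^sup>2"
    by (simp only:) (simp add: power2_eq_square algebra_simps)
  show "\<epsilon> * (norm b)\<^sup>2 \<noteq> 0" using b \<epsilon> by simp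
qed

end
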